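(* For every Boolean function $f:\{0,1\}^n\to\{0,1\}$, we have $\deg(f)\le \lambda(f)^2$.
   Context: $\deg(f)$ is the degree of the unique multilinear real polynomial $q\in\mathbb{R}[x_1,\dots,x_n]$ with $q(x)=f(x)$ for all $x\in\{0,1\}^n$. For $f$ with domain $\mathrm{Dom}(f)\subseteq\{0,1\}^n$, the sensitivity graph $G_f$ has vertex set $\mathrm{Dom}(f)$ and an edge between $x$ and $y$ iff $x,y$ differ in exactly one coordinate and $f(x)\ne f(y)$. Let $A_f$ be its adjacency matrix; the spectral sensitivity is $\lambda(f)=\|A_f\|$ (spectral norm). *)

theory Defs
  imports Complex_Main
begin

text \<open>Points of the Boolean cube {0,1}^n are encoded as functions nat \<Rightarrow> bool
  that are False outside {..<n}; coordinate x_i is of_bool (x i).\<close>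

definition cube :: "nat \<Rightarrow> (nat \<Rightarrow> bool) set" where
  "cube n = {x. \<forall>i\<ge>n. \<not> x i}"

definition mlpoly_eval :: "nat \<Rightarrow> (nat set \<Rightarrow> real) \<Rightarrow> (nat \<Rightarrow> bool) \<Rightarrow> real" where
  "mlpoly_eval n c x = (\<Sum>S\<in>Pow {..<n}. c S * (\<Prod>i\<in>S. of_bool (x i)))"

definition ml_coeffs :: "nat \<Rightarrow> ((nat \<Rightarrow> bool) \<Rightarrow> bool) \<Rightarrow> (nat set \<Rightarrow> real)" where
  "ml_coeffs n f = (THE c. (\<forall>S. \<not> S \<subseteq> {..<n} \<longrightarrow> c S = 0) \<and>
                          (\<forall>x\<in>cube n. mlpoly_eval n c x = of_bool (f x)))"

definition bdeg :: "nat \<Rightarrow> ((nat \<Rightarrow> bool) \<Rightarrow> bool) \<Rightarrow> nat" where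
  "bdeg n f = Max ({0} \<union> {card S | S. S \<subseteq> {..<n} \<and> ml_coeffs n f S \<noteq> 0})"

definition sens_adj :: "nat \<Rightarrow> ((nat \<Rightarrow> bool) \<Rightarrow> bool) \<Rightarrow> (nat \<Rightarrow> bool) \<Rightarrow> (nat \<Rightarrow> bool) \<Rightarrow> real" where
  "sens_adj n f x y = of_bool (x \<in> cube n \<and> y \<in> cube n \<and>
        card {i. x i \<noteq> y i} = 1 \<and> f x \<noteq> f y)"

definition spec_sens :: "nat \<Rightarrow> ((nat \<Rightarrow> bool) \<Rightarrow> bool) \<Rightarrow> real" where
  "spec_sens n f = Sup {sqrt (\<Sum>x\<in>cube n. (\<Sum>y\<in>cube n. sens_adj n f x y * v y)\<^sup>2) | v.
                         (\<Sum>y\<in>cube n. (v y)\<^sup>2) = 1}"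

end

theory Submission
  imports Defs
begin

text \<open>Following Huang's proof of the sensitivity conjecture. Let \<open>S\<close> be a monomial of maximal
  degree \<open>d\<close> in the multilinear representative of \<open>f\<close>. Its coefficient is the Moebius transform
  of \<open>f\<close> on the subcube spanned by \<open>S\<close>, and it is nonzero exactly when \<open>f\<close>, twisted by the
  parity of \<open>card (S - T)\<close>, is unbalanced on that subcube. So one value class \<open>H\<close> of the
  twisted function has more than \<open>2\<^bsup>d-1\<^esup>\<close> points, and every cube edge inside \<open>H\<close> is a
  sensitive edge of \<open>f\<close>. Huang's signed adjacency operator \<open>A\<close> of the \<open>d\<close>-cube satisfies
  \<open>A\<^sup>2 = d\<close>, so its \<open>sqrt d\<close>-eigenspace has dimension \<open>2\<^bsup>d-1\<^esup>\<close> and contains a nonzero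
  vector \<open>v\<close> supported on \<open>H\<close>. Then \<open>\<bar>v\<bar>\<close>, normalised, is a test vector showing that the
  sensitivity graph has spectral norm at least \<open>sqrt d\<close>.\<close>

section \<open>Moebius inversion on the Boolean lattice\<close>

definition moebius :: "('a set \<Rightarrow> real) \<Rightarrow> 'a set \<Rightarrow> real" where
  "moebius g S = (\<Sum>T\<in>Pow S. (-1) ^ (card S - card T) * g T)"

lemma moebius_sum_Pow:
  assumes "finite S"
  shows "moebius (\<lambda>T. \<Sum>U\<in>Pow T. c U) S = c S"
  unfolding moebius_def by (rule inclusion_exclusion_mobius[symmetric]) (use assms in auto)

lemma sum_Pow_moebius:
  assumes "finite X"
  shows "(\<Sum>U\<in>Pow X. moebius g U) = g X"
proof -
  define G where "G S = (\<Sum>T\<in>Pow S. (-1) ^ card T * g T)" for S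
  have "moebius g U = (-1) ^ card U * G U" if "U \<subseteq> X" for U
  proof -
    have "finite U" using assms that finite_subset by blast
    then show ?thesis
      unfolding moebius_def G_def sum_distrib_left
      by (intro sum.cong refl)
         (auto simp: card_mono neg_one_power_add_eq_neg_one_power_diff power_add[symmetric] mult.assoc[symmetric])
  qed
  then have "(\<Sum>U\<in>Pow X. moebius g U) = (\<Sum>U\<in>Pow X. (-1) ^ card U * G U)"
    by (intro sum.cong) auto
  also have "\<dots> = g X"
    by (rule inclusion_exclusion_symmetric[symmetric]) (use assms G_def in auto)
  finally show ?thesis .
qed

lemma moebius_const_one:
  assumes "finite S"
  shows "moebius (\<lambda>_. 1) S = of_bool (S = {})"
proof -
  have "(\<Sum>U\<in>Pow T. of_bool (U = {}) :: real) = 1" if "T \<in> Pow S" for T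
  proof -
    have "finite T" using that assms finite_subset by blast
    then show ?thesis by (simp add: of_bool_def sum.delta)
  qed
  then have "moebius (\<lambda>_. 1) S = moebius (\<lambda>T. \<Sum>U\<in>Pow T. of_bool (U = {})) S"
    unfolding moebius_def by (intro sum.cong) auto
  then show ?thesis using moebius_sum_Pow[OF assms] by simp
qed

lemma cube_eq_image: "cube n = (\<lambda>T i. i \<in> T) ` Pow {..<n}"
proof
  show "cube n \<subseteq> (\<lambda>T i. i \<in> T) ` Pow {..<n}"
  proof
    fix x assume "x \<in> cube n"
    then have "{i. x i} \<in> Pow {..<n}" unfolding cube_def by (auto simp: not_le[symmetric])
    then show "x \<in> (\<lambda>T i. i \<in> T) ` Pow {..<n}" by (intro image_eqI[of _ _ "{i. x i}"]) auto
  qed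
qed (auto simp: cube_def)

lemma set_pred_in_cube: "T \<subseteq> {..<n} \<Longrightarrow> (\<lambda>i. i \<in> T) \<in> cube n"
  by (auto simp: cube_eq_image)

lemma inj_on_set_pred: "inj_on (\<lambda>T i. i \<in> T) A"
  by (rule inj_onI) (metis Collect_mem_eq)

lemma finite_cube: "finite (cube n)"
  unfolding cube_eq_image by simp

lemma sum_cube: "(\<Sum>x\<in>cube n. F x) = (\<Sum>T\<in>Pow {..<n}. F (\<lambda>i. i \<in> T))"
  unfolding cube_eq_image by (simp add: sum.reindex[OF inj_on_set_pred])

lemma mlpoly_eval_set_pred:
  assumes "T \<subseteq> {..<n}"
  shows "mlpoly_eval n c (\<lambda>i. i \<in> T) = (\<Sum>U\<in>Pow T. c U)"
proof -
  have "(\<Prod>i\<in>U. of_bool (i \<in> T) :: real) = of_bool (U \<subseteq> T)" if "finite U" for U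
    using that by (induction U rule: finite_induct) auto
  then have "mlpoly_eval n c (\<lambda>i. i \<in> T) = (\<Sum>U\<in>Pow {..<n}. if U \<subseteq> T then c U else 0)"
    unfolding mlpoly_eval_def by (intro sum.cong refl) (auto simp: finite_subset)
  also have "\<dots> = (\<Sum>U\<in>Pow {..<n} \<inter> {U. U \<subseteq> T}. c U)"
    by (simp add: sum.inter_restrict)
  also have "Pow {..<n} \<inter> {U. U \<subseteq> T} = Pow T" using assms by auto
  finally show ?thesis .
qed

lemma ml_coeffs_eq_moebius:
  assumes "S \<subseteq> {..<n}"
  shows "ml_coeffs n f S = moebius (\<lambda>T. of_bool (f (\<lambda>i. i \<in> T))) S"
proof -
  let ?g = "\<lambda>T. of_bool (f (\<lambda>i. i \<in> T)) :: real"
  define c0 where "c0 S = (if S \<subseteq> {..<n} then moebius ?g S else 0)" for S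
  have "ml_coeffs n f = c0"
    unfolding ml_coeffs_def
  proof (rule the_equality)
    have "mlpoly_eval n c0 (\<lambda>i. i \<in> X) = ?g X" if "X \<subseteq> {..<n}" for X
    proof -
      have "mlpoly_eval n c0 (\<lambda>i. i \<in> X) = (\<Sum>U\<in>Pow X. moebius ?g U)"
        using that unfolding mlpoly_eval_set_pred[OF that] c0_def by (intro sum.cong) auto
      also have "\<dots> = ?g X" using that finite_subset by (intro sum_Pow_moebius) blast
      finally show ?thesis .
    qed
    then show "(\<forall>S. \<not> S \<subseteq> {..<n} \<longrightarrow> c0 S = 0) \<and> (\<forall>x\<in>cube n. mlpoly_eval n c0 x = of_bool (f x))"
      unfolding c0_def cube_eq_image by auto
  next
    fix c assume c: "(\<forall>S. \<not> S \<subseteq> {..<n} \<longrightarrow> c S = 0) \<and> (\<forall>x\<in>cube n. mlpoly_eval n c x = of_bool (f x))"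
    have "c S = moebius ?g S" if S: "S \<subseteq> {..<n}" for S
    proof -
      have "(\<Sum>U\<in>Pow T. c U) = ?g T" if "T \<in> Pow S" for T
        using c S that mlpoly_eval_set_pred[of T n c] set_pred_in_cube[of T n] by auto
      then have "moebius (\<lambda>T. \<Sum>U\<in>Pow T. c U) S = moebius ?g S"
        unfolding moebius_def by (intro sum.cong) auto
      then show ?thesis using S finite_subset moebius_sum_Pow by (metis finite_lessThan)
    qed
    then show "c = c0" using c unfolding c0_def by auto
  qed
  then show ?thesis using assms unfolding c0_def by simp
qed

lemma bdeg_attained:
  assumes "bdeg n f \<noteq> 0"
  obtains S where "S \<subseteq> {..<n}" "ml_coeffs n f S \<noteq> 0" "card S = bdeg n f"
proof -
  let ?D = "{card S | S. S \<subseteq> {..<n} \<and> ml_coeffs n f S \<noteq> 0}"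
  have "?D \<subseteq> card ` Pow {..<n}" by auto
  then have "finite ?D" by (rule finite_subset) simp
  then have "bdeg n f \<in> {0} \<union> ?D" unfolding bdeg_def by (intro Max_in) auto
  then show ?thesis using assms that by auto
qed

section \<open>Huang's signed hypercube\<close>

definition flip :: "'a set \<Rightarrow> 'a \<Rightarrow> 'a set" where
  "flip T i = (if i \<in> T then T - {i} else insert i T)"

lemma flip_flip [simp]: "flip (flip T i) i = T"
  unfolding flip_def by auto

lemma flip_commute: "flip (flip T i) j = flip (flip T j) i"
  unfolding flip_def by auto

lemma flip_subset: "T \<subseteq> S \<Longrightarrow> i \<in> S \<Longrightarrow> flip T i \<subseteq> S"
  unfolding flip_def by auto

lemma inj_on_flip: "inj_on (flip T) A"
  unfolding flip_def by (rule inj_onI) (auto split: if_splits)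

lemma minus_one_power_card_flip:
  assumes "finite T"
  shows "(-1::real) ^ card (flip T i) = - ((-1) ^ card T)"
proof (cases "i \<in> T")
  case True
  then have "card T = Suc (card (T - {i}))" using assms by (metis card_Suc_Diff1)
  then have "(-1::real) ^ card T = - ((-1) ^ card (T - {i}))" by simp
  then show ?thesis using True unfolding flip_def by simp
qed (use assms in \<open>simp add: flip_def\<close>)

lemma flip_Diff: "T \<subseteq> S \<Longrightarrow> i \<in> S \<Longrightarrow> S - flip T i = flip (S - T) i"
  unfolding flip_def by auto

text \<open>Under the signing below every 2-dimensional face of the cube carries an odd number of minus
  signs, so the signed adjacency operator squares to \<open>card S\<close> times the identity.\<close>

definition huang_sign :: "'a::linorder set \<Rightarrow> 'a \<Rightarrow> real" where
  "huang_sign T i = (-1) ^ card {k\<in>T. k < i}"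

definition huang_op :: "'a::linorder set \<Rightarrow> ('a set \<Rightarrow> real) \<Rightarrow> 'a set \<Rightarrow> real" where
  "huang_op S z T = (\<Sum>i\<in>S. huang_sign T i * z (flip T i))"

lemma abs_huang_sign [simp]: "\<bar>huang_sign T i\<bar> = 1"
  unfolding huang_sign_def by (simp add: power_abs)

lemma huang_sign_squared [simp]: "huang_sign T i * huang_sign T i = 1"
  unfolding huang_sign_def by (simp flip: power_mult_distrib)

lemma huang_sign_flip_le: "j \<le> i \<Longrightarrow> huang_sign (flip T i) j = huang_sign T j"
  unfolding huang_sign_def flip_def by (rule arg_cong[where f = "\<lambda>A. (-1) ^ card A"]) auto

lemma huang_sign_flip_less:
  assumes "finite T" "i < j"
  shows "huang_sign (flip T i) j = - huang_sign T j"
proof -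
  have "{k\<in>flip T i. k < j} = flip {k\<in>T. k < j} i" using assms(2) unfolding flip_def by auto
  then show ?thesis
    unfolding huang_sign_def using minus_one_power_card_flip[of "{k\<in>T. k < j}" i] assms(1) by simp
qed

lemma huang_sign_anticommute:
  assumes "finite T" "i \<noteq> j"
  shows "huang_sign T i * huang_sign (flip T i) j = - (huang_sign T j * huang_sign (flip T j) i)"
proof (cases "i < j")
  case True
  then show ?thesis using huang_sign_flip_less[OF assms(1) True] huang_sign_flip_le[of i j T] by simp
next
  case False
  then have "j < i" using assms(2) by simp
  then show ?thesis using huang_sign_flip_less[OF assms(1) \<open>j < i\<close>] huang_sign_flip_le[of j i T] by simp
qed

lemma huang_op_linear: "huang_op S (\<lambda>T. a * x T + y T) T = a * huang_op S x T + huang_op S y T"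
  unfolding huang_op_def by (simp add: algebra_simps sum.distrib sum_distrib_left)

lemma huang_op_sum:
  "huang_op S (\<lambda>V. \<Sum>u\<in>U. w u * g u V) T = (\<Sum>u\<in>U. w u * huang_op S (g u) T)"
  unfolding huang_op_def sum_distrib_left by (subst sum.swap) (simp add: mult_ac)

lemma sum_sum_antisymmetric_eq_zero:
  fixes G :: "'a \<Rightarrow> 'a \<Rightarrow> real"
  assumes "\<And>i j. i \<in> S \<Longrightarrow> j \<in> S \<Longrightarrow> G i j = - G j i"
  shows "(\<Sum>i\<in>S. \<Sum>j\<in>S. G i j) = 0"
proof -
  have "(\<Sum>i\<in>S. \<Sum>j\<in>S. G i j) = (\<Sum>j\<in>S. \<Sum>i\<in>S. - G j i)"
    by (subst sum.swap) (intro sum.cong refl assms)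
  then show ?thesis by (simp add: sum_negf)
qed

lemma huang_op_squared:
  assumes "finite S" "finite T"
  shows "huang_op S (huang_op S z) T = real (card S) * z T"
proof -
  define F where "F i j = huang_sign T i * huang_sign (flip T i) j * z (flip (flip T i) j)" for i j
  have "huang_op S (huang_op S z) T = (\<Sum>i\<in>S. \<Sum>j\<in>S. F i j)"
    unfolding huang_op_def F_def by (simp add: sum_distrib_left mult.assoc)
  also have "\<dots> = (\<Sum>i\<in>S. \<Sum>j\<in>S. if i = j then F i j else 0) + (\<Sum>i\<in>S. \<Sum>j\<in>S. if i \<noteq> j then F i j else 0)"
    unfolding sum.distrib[symmetric] by (intro sum.cong refl) simp
  also have "(\<Sum>i\<in>S. \<Sum>j\<in>S. if i \<noteq> j then F i j else 0) = 0"
  proof (rule sum_sum_antisymmetric_eq_zero)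
    have F_antisym: "F i j = - F j i" if "i \<noteq> j" for i j
      unfolding F_def using huang_sign_anticommute[OF assms(2) that] flip_commute[of T i j]
      by (simp add: mult.assoc)
    show "(if i \<noteq> j then F i j else 0) = - (if j \<noteq> i then F j i else 0)" for i j
      using F_antisym[of i j] by auto
  qed
  also have "(\<Sum>i\<in>S. \<Sum>j\<in>S. if i = j then F i j else 0) = (\<Sum>i\<in>S. z T)"
    using assms(1) unfolding F_def by (simp add: sum.delta huang_sign_flip_le)
  finally show ?thesis by simp
qed

lemma homogeneous_system_nontrivial:
  fixes a :: "'e \<Rightarrow> 'u \<Rightarrow> real"
  assumes "finite E" "finite U" "card E < card U"
  shows "\<exists>w. (\<exists>u\<in>U. w u \<noteq> 0) \<and> (\<forall>e\<in>E. (\<Sum>u\<in>U. a e u * w u) = 0)"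
  using assms
proof (induction E arbitrary: U a rule: finite_induct)
  case empty
  then obtain u where "u \<in> U" by fastforce
  then show ?case by (intro exI[of _ "\<lambda>_. 1"]) auto
next
  case (insert e E)
  show ?case
  proof (cases "\<forall>u\<in>U. a e u = 0")
    case True
    have "card E < card U" using insert by simp
    then obtain w where "\<exists>u\<in>U. w u \<noteq> 0" "\<forall>e'\<in>E. (\<Sum>u\<in>U. a e' u * w u) = 0"
      using insert.IH[OF insert.prems(1)] by blast
    then show ?thesis using True by auto
  next
    case False
    then obtain u0 where u0: "u0 \<in> U" "a e u0 \<noteq> 0" by blast
    let ?U = "U - {u0}"
    define a' where "a' e' u = a e' u - a e' u0 * a e u / a e u0" for e' u
    have "finite ?U" "card E < card ?U" using insert u0 by auto
    then obtain w' where w': "\<exists>u\<in>?U. w' u \<noteq> 0" "\<forall>e'\<in>E. (\<Sum>u\<in>?U. a' e' u * w' u) = 0"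
      using insert.IH by blast
    define t where "t = (\<Sum>u\<in>?U. a e u * w' u)"
    define w where "w = w'(u0 := - t / a e u0)"
    have split: "(\<Sum>u\<in>U. a e' u * w u) = a e' u0 * w u0 + (\<Sum>u\<in>?U. a e' u * w' u)" for e'
    proof -
      have "(\<Sum>u\<in>?U. a e' u * w u) = (\<Sum>u\<in>?U. a e' u * w' u)"
        unfolding w_def by (intro sum.cong) auto
      then show ?thesis using insert.prems u0 by (simp add: sum.remove)
    qed
    have "(\<Sum>u\<in>U. a e' u * w u) = 0" if "e' \<in> insert e E" for e'
    proof (cases "e' = e")
      case False
      have "(\<Sum>u\<in>?U. a' e' u * w' u) = (\<Sum>u\<in>?U. a e' u * w' u) - a e' u0 / a e u0 * t"
        unfolding a'_def t_def by (simp add: algebra_simps sum_subtractf sum_distrib_left)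
      then show ?thesis using w'(2) that False split[of e'] u0 unfolding w_def by simp
    qed (use split[of e] u0 in \<open>simp add: w_def t_def\<close>)
    moreover have "\<exists>u\<in>U. w u \<noteq> 0" using w'(1) unfolding w_def by auto
    ultimately show ?thesis by blast
  qed
qed

lemma huang_op_shifted_eigenvector:
  assumes "finite S" "finite T"
  shows "huang_op S (\<lambda>T. sqrt (card S) * w T + huang_op S w T) T
           = sqrt (card S) * (sqrt (card S) * w T + huang_op S w T)"
  using assms by (subst huang_op_linear) (simp add: huang_op_squared algebra_simps)

lemma huang_op_insert_eq:
  assumes "finite S" "m \<in> S" "m \<notin> u" and w: "\<And>T. m \<in> T \<Longrightarrow> w T = 0"
  shows "huang_op S w (insert m u) = huang_sign (insert m u) m * w u"
proof -
  have "huang_sign (insert m u) i * w (flip (insert m u) i) = 0" if "i \<in> S - {m}" for i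
    using that w unfolding flip_def by auto
  then have "huang_op S w (insert m u) = huang_sign (insert m u) m * w (flip (insert m u) m)"
    unfolding huang_op_def using assms(1,2) by (simp add: sum.remove[of S m] sum.neutral)
  also have "flip (insert m u) m = u" using assms(3) unfolding flip_def by auto
  finally show ?thesis .
qed

lemma huang_eigenvector_on_large_set:
  assumes S: "finite S" "S \<noteq> {}" and H: "H \<subseteq> Pow S" "card H > 2 ^ (card S - 1)"
  obtains v where "\<exists>T\<in>H. v T \<noteq> 0" "\<forall>T\<in>Pow S - H. v T = 0"
    "\<forall>T\<in>Pow S. huang_op S v T = sqrt (card S) * v T"
proof -
  txt \<open>Since \<open>A\<^sup>2 = d\<close>, every \<open>B w = (sqrt d + A) w\<close> is a \<open>sqrt d\<close>-eigenvector. For \<open>w\<close>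
    supported on the subsets avoiding a fixed \<open>m\<close> (a space of dimension \<open>2\<^bsup>d-1\<^esup>\<close>),
    \<open>B w\<close> at \<open>insert m u\<close> is \<open>\<plusminus>w u\<close>, so \<open>B\<close> is injective there; fewer than \<open>2\<^bsup>d-1\<^esup>\<close>
    linear conditions then force some nonzero \<open>B w\<close> to vanish off \<open>H\<close>.\<close>
  obtain m where m: "m \<in> S" using S by blast
  define d where "d = card S"
  define U where "U = Pow (S - {m})"
  define E where "E = Pow S - H"
  define B where "B w T = sqrt d * w T + huang_op S w T" for w T
  have "card U = 2 ^ (d - 1)" unfolding U_def d_def using S m by (simp add: card_Pow)
  moreover have "card E = 2 ^ d - card H"
    unfolding E_def d_def using S H by (simp add: card_Diff_subset card_Pow finite_subset)
  moreover have "(2::nat) ^ d = 2 * 2 ^ (d - 1)"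
    using S unfolding d_def by (metis card_gt_0_iff Suc_diff_1 power_Suc)
  moreover have "(0::nat) < 2 ^ (d - 1)" by simp
  ultimately have "card E < card U" using H(2) unfolding d_def by linarith
  then obtain w where w: "\<exists>u\<in>U. w u \<noteq> 0" "\<forall>T\<in>E. (\<Sum>u\<in>U. B (\<lambda>V. of_bool (V = u)) T * w u) = 0"
    using homogeneous_system_nontrivial[of E U "\<lambda>T u. B (\<lambda>V. of_bool (V = u)) T"] S
    unfolding U_def E_def by blast
  define w0 where "w0 V = (\<Sum>u\<in>U. w u * of_bool (V = u))" for V
  define v where "v = B w0"
  have w0_eq: "w0 V = (if V \<in> U then w V else 0)" for V
    unfolding w0_def using S by (simp add: of_bool_def if_distrib sum.delta' U_def cong: if_cong)
  have "v T = (\<Sum>u\<in>U. B (\<lambda>V. of_bool (V = u)) T * w u)" for T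
    unfolding v_def B_def w0_def huang_op_sum by (simp add: algebra_simps sum.distrib sum_distrib_left)
  then have v_off_H: "\<forall>T\<in>Pow S - H. v T = 0" using w(2) unfolding E_def by simp
  have eigen: "\<forall>T\<in>Pow S. huang_op S v T = sqrt (card S) * v T"
    using S finite_subset unfolding v_def B_def d_def by (blast intro: huang_op_shifted_eigenvector)
  obtain u where u: "u \<in> U" "w u \<noteq> 0" using w(1) by blast
  then have "m \<notin> u" "insert m u \<in> Pow S" using m unfolding U_def by auto
  have "w0 T = 0" if "m \<in> T" for T using that w0_eq unfolding U_def by auto
  then have "v (insert m u) = huang_sign (insert m u) m * w u"
    using huang_op_insert_eq[OF S(1) m \<open>m \<notin> u\<close>, of w0] w0_eq u(1) unfolding v_def B_def by simp
  then have "v (insert m u) \<noteq> 0" using u(2) by (metis huang_sign_squared mult_eq_0_iff zero_neq_one)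
  moreover have "insert m u \<in> H" using calculation v_off_H \<open>insert m u \<in> Pow S\<close> by blast
  ultimately show ?thesis using that v_off_H eigen by blast
qed

section \<open>Sensitive edges from a top-degree coefficient\<close>

lemma even_card_Diff_flip:
  assumes "finite S" "T \<subseteq> S" "i \<in> S"
  shows "even (card S - card (flip T i)) \<longleftrightarrow> odd (card S - card T)"
proof -
  have "(-1::real) ^ card (S - flip T i) = - ((-1) ^ card (S - T))"
    using flip_Diff[OF assms(2,3)] minus_one_power_card_flip[of "S - T" i] assms(1) by simp
  moreover have "flip T i \<subseteq> S" using flip_subset[OF assms(2,3)] .
  ultimately show ?thesis
    using assms by (auto simp: card_Diff_subset finite_subset minus_one_power_iff split: if_splits)
qed

lemma parity_twist_unbalanced:
  assumes "finite S" "S \<noteq> {}" "moebius (\<lambda>T. of_bool (F T)) S \<noteq> 0"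
  shows "2 * card {T\<in>Pow S. F T = even (card S - card T)} \<noteq> 2 ^ card S"
proof -
  let ?P = "{T\<in>Pow S. F T = even (card S - card T)}"
  let ?s = "\<lambda>T. (-1::real) ^ (card S - card T)"
  have "(\<Sum>T\<in>Pow S. ?s T * (2 * of_bool (F T) - 1))
          = 2 * moebius (\<lambda>T. of_bool (F T)) S - moebius (\<lambda>_. 1) S"
    unfolding moebius_def by (simp add: algebra_simps sum_subtractf sum_distrib_left)
  also have "\<dots> = 2 * moebius (\<lambda>T. of_bool (F T)) S" using moebius_const_one[OF assms(1)] assms(2) by simp
  finally have "(\<Sum>T\<in>Pow S. ?s T * (2 * of_bool (F T) - 1)) \<noteq> 0" using assms(3) by simp
  moreover have "(\<Sum>T\<in>Pow S. ?s T * (2 * of_bool (F T) - 1)) = (\<Sum>T\<in>Pow S. 2 * of_bool (T \<in> ?P) - 1)"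
    by (intro sum.cong refl) (auto simp: minus_one_power_iff)
  moreover have "(\<Sum>T\<in>Pow S. of_bool (T \<in> ?P) :: real) = card ?P"
    using assms(1) by (simp add: sum.inter_restrict[symmetric] Int_def conj_commute)
  ultimately have "2 * real (card ?P) \<noteq> 2 ^ card S"
    using assms(1) by (simp add: sum_subtractf sum_distrib_left card_Pow)
  then show ?thesis unfolding of_nat_eq_iff[where 'a = real, symmetric] by simp
qed

lemma large_set_of_sensitive_edges:
  assumes S: "finite S" "S \<noteq> {}"
    and unbalanced: "2 * card {T\<in>Pow S. F T = even (card S - card T)} \<noteq> 2 ^ card S"
  obtains H where "H \<subseteq> Pow S" "card H > 2 ^ (card S - 1)"
    "\<forall>T\<in>H. \<forall>i\<in>S. flip T i \<in> H \<longrightarrow> F T \<noteq> F (flip T i)"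
proof -
  define P where "P b = {T\<in>Pow S. F T = (even (card S - card T) = b)}" for b
  txt \<open>Along an edge the parity of \<open>card T\<close> changes, so within either class \<open>P b\<close> so does \<open>F\<close>.\<close>
  have sensitive: "F T \<noteq> F (flip T i)" if "T \<in> P b" "i \<in> S" "flip T i \<in> P b" for T i b
    using that even_card_Diff_flip[OF S(1) _ \<open>i \<in> S\<close>, of T] unfolding P_def by auto
  have "P False = Pow S - P True" "P True \<subseteq> Pow S" unfolding P_def by auto
  then have "card (P True) + card (P False) = 2 ^ card S"
    using S(1) card_mono[of "Pow S" "P True"] by (simp add: card_Diff_subset finite_subset card_Pow)
  moreover have "(2::nat) ^ card S = 2 * 2 ^ (card S - 1)"
    using S by (metis card_gt_0_iff Suc_diff_1 power_Suc)
  moreover have "2 * card (P True) \<noteq> 2 ^ card S" using unbalanced unfolding P_def by simp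
  ultimately have "card (P True) > 2 ^ (card S - 1) \<or> card (P False) > 2 ^ (card S - 1)" by arith
  then obtain b where "card (P b) > 2 ^ (card S - 1)" by blast
  moreover have "P b \<subseteq> Pow S" unfolding P_def by auto
  ultimately show ?thesis using that sensitive by blast
qed

section \<open>Test vectors for the spectral sensitivity\<close>

lemma bdd_above_spec_sens:
  "bdd_above {sqrt (\<Sum>x\<in>cube n. (\<Sum>y\<in>cube n. sens_adj n f x y * v y)\<^sup>2) | v.
                 (\<Sum>y\<in>cube n. (v y)\<^sup>2) = 1}"
proof (rule bdd_aboveI, clarify)
  fix v :: "(nat \<Rightarrow> bool) \<Rightarrow> real" assume v: "(\<Sum>y\<in>cube n. (v y)\<^sup>2) = 1"
  define N where "N = real (card (cube n))"
  have entry_le: "\<bar>sens_adj n f x y * v y\<bar> \<le> 1" if "y \<in> cube n" for x y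
  proof -
    have "(v y)\<^sup>2 \<le> 1" using member_le_sum[of y "cube n" "\<lambda>y. (v y)\<^sup>2"] that finite_cube v by simp
    then show ?thesis unfolding sens_adj_def by (auto simp: abs_mult abs_square_le_1)
  qed
  have "\<bar>\<Sum>y\<in>cube n. sens_adj n f x y * v y\<bar> \<le> N" for x
  proof -
    have "\<bar>\<Sum>y\<in>cube n. sens_adj n f x y * v y\<bar> \<le> (\<Sum>y\<in>cube n. \<bar>sens_adj n f x y * v y\<bar>)"
      by (rule sum_abs)
    also have "\<dots> \<le> (\<Sum>y\<in>cube n. 1)" by (rule sum_mono) (rule entry_le)
    finally show ?thesis unfolding N_def by simp
  qed
  then have "(\<Sum>y\<in>cube n. sens_adj n f x y * v y)\<^sup>2 \<le> N\<^sup>2" for x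
    by (metis abs_ge_zero power2_abs power_mono)
  then have "(\<Sum>x\<in>cube n. (\<Sum>y\<in>cube n. sens_adj n f x y * v y)\<^sup>2) \<le> (\<Sum>x\<in>cube n. N\<^sup>2)"
    by (rule sum_mono)
  then show "sqrt (\<Sum>x\<in>cube n. (\<Sum>y\<in>cube n. sens_adj n f x y * v y)\<^sup>2) \<le> sqrt (N * N\<^sup>2)"
    unfolding N_def by simp
qed

lemma norm_sens_adj_le_spec_sens:
  assumes "(\<Sum>y\<in>cube n. (u y)\<^sup>2) = 1"
  shows "sqrt (\<Sum>x\<in>cube n. (\<Sum>y\<in>cube n. sens_adj n f x y * u y)\<^sup>2) \<le> spec_sens n f"
  unfolding spec_sens_def by (rule cSup_upper[OF _ bdd_above_spec_sens]) (use assms in blast)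

lemma sens_adj_flip:
  assumes "T \<subseteq> {..<n}" "i < n" "f (\<lambda>j. j \<in> T) \<noteq> f (\<lambda>j. j \<in> flip T i)"
  shows "sens_adj n f (\<lambda>j. j \<in> T) (\<lambda>j. j \<in> flip T i) = 1"
proof -
  have "{j. (j \<in> T) \<noteq> (j \<in> flip T i)} = {i}" unfolding flip_def by auto
  moreover have "(\<lambda>j. j \<in> T) \<in> cube n" "(\<lambda>j. j \<in> flip T i) \<in> cube n"
    using assms(1,2) flip_subset[OF assms(1), of i] by (auto intro!: set_pred_in_cube)
  ultimately show ?thesis unfolding sens_adj_def using assms(3) by simp
qed

lemma sum_flip_le_sens_adj_row:
  assumes "T \<subseteq> S" "S \<subseteq> {..<n}" "\<And>x. u x \<ge> 0"
  shows "(\<Sum>i\<in>S. sens_adj n f (\<lambda>j. j \<in> T) (\<lambda>j. j \<in> flip T i) * u (\<lambda>j. j \<in> flip T i))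
           \<le> (\<Sum>y\<in>cube n. sens_adj n f (\<lambda>j. j \<in> T) y * u y)"
proof -
  let ?a = "\<lambda>T'. sens_adj n f (\<lambda>j. j \<in> T) (\<lambda>j. j \<in> T') * u (\<lambda>j. j \<in> T')"
  have "(\<Sum>i\<in>S. ?a (flip T i)) = (\<Sum>T'\<in>flip T ` S. ?a T')"
    by (simp add: sum.reindex[OF inj_on_flip])
  also have "\<dots> \<le> (\<Sum>T'\<in>Pow {..<n}. ?a T')"
  proof (rule sum_mono2)
    show "flip T ` S \<subseteq> Pow {..<n}" using flip_subset[OF assms(1)] assms(2) by blast
  qed (use assms(3) in \<open>auto simp: sens_adj_def\<close>)
  finally show ?thesis unfolding sum_cube .
qed

definition abs_on_cube :: "nat set set \<Rightarrow> (nat set \<Rightarrow> real) \<Rightarrow> (nat \<Rightarrow> bool) \<Rightarrow> real" where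
  "abs_on_cube H v x = (if {i. x i} \<in> H then \<bar>v {i. x i}\<bar> else 0)"

lemma abs_on_cube_set_pred: "abs_on_cube H v (\<lambda>j. j \<in> T) = (if T \<in> H then \<bar>v T\<bar> else 0)"
  unfolding abs_on_cube_def by simp

lemma abs_on_cube_nonneg: "abs_on_cube H v x \<ge> 0"
  unfolding abs_on_cube_def by simp

lemma eigenvector_le_sens_adj_row:
  assumes S: "S \<subseteq> {..<n}" and H: "H \<subseteq> Pow S" "T \<in> H"
    and sensitive: "\<forall>T\<in>H. \<forall>i\<in>S. flip T i \<in> H \<longrightarrow> f (\<lambda>j. j \<in> T) \<noteq> f (\<lambda>j. j \<in> flip T i)"
    and v: "\<forall>T\<in>Pow S - H. v T = 0" "\<forall>T\<in>Pow S. huang_op S v T = sqrt (card S) * v T"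
  shows "sqrt (card S) * \<bar>v T\<bar> \<le> (\<Sum>y\<in>cube n. sens_adj n f (\<lambda>j. j \<in> T) y * abs_on_cube H v y)"
proof -
  have T: "T \<subseteq> S" using H by auto
  have edge_term: "\<bar>v (flip T i)\<bar>
      = sens_adj n f (\<lambda>j. j \<in> T) (\<lambda>j. j \<in> flip T i) * abs_on_cube H v (\<lambda>j. j \<in> flip T i)"
    if "i \<in> S" for i
  proof (cases "flip T i \<in> H")
    case True
    then have "f (\<lambda>j. j \<in> T) \<noteq> f (\<lambda>j. j \<in> flip T i)" using sensitive H(2) that by blast
    moreover have "i < n" using that S by auto
    ultimately show ?thesis
      using sens_adj_flip[OF order.trans[OF T S]] True by (simp add: abs_on_cube_set_pred)
  qed (use v(1) flip_subset[OF T that] in \<open>auto simp: abs_on_cube_set_pred\<close>)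
  have "sqrt (card S) * \<bar>v T\<bar> = \<bar>huang_op S v T\<bar>" using v(2) T by (simp add: abs_mult)
  also have "\<dots> \<le> (\<Sum>i\<in>S. \<bar>v (flip T i)\<bar>)"
    unfolding huang_op_def by (rule order.trans[OF sum_abs]) (simp add: abs_mult)
  also have "\<dots> \<le> (\<Sum>y\<in>cube n. sens_adj n f (\<lambda>j. j \<in> T) y * abs_on_cube H v y)"
    using sum_flip_le_sens_adj_row[OF T S abs_on_cube_nonneg] by (simp add: edge_term)
  finally show ?thesis .
qed

lemma sqrt_card_le_spec_sens:
  assumes S: "S \<subseteq> {..<n}" and H: "H \<subseteq> Pow S"
    and sensitive: "\<forall>T\<in>H. \<forall>i\<in>S. flip T i \<in> H \<longrightarrow> f (\<lambda>j. j \<in> T) \<noteq> f (\<lambda>j. j \<in> flip T i)"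
    and v: "\<exists>T\<in>H. v T \<noteq> 0" "\<forall>T\<in>Pow S - H. v T = 0"
      "\<forall>T\<in>Pow S. huang_op S v T = sqrt (card S) * v T"
  shows "sqrt (card S) \<le> spec_sens n f"
proof -
  have "finite H" using H S finite_subset by (metis finite_Pow_iff finite_lessThan)
  define Q where "Q = (\<Sum>T\<in>H. (v T)\<^sup>2)"
  have "Q > 0"
    unfolding Q_def using v(1) \<open>finite H\<close> by (metis sum_pos2 zero_less_power2 zero_le_power2)
  define W where "W x = (\<Sum>y\<in>cube n. sens_adj n f x y * abs_on_cube H v y)" for x
  have H_cube: "Pow {..<n} \<inter> H = H" using H S by auto
  have "(\<Sum>y\<in>cube n. (abs_on_cube H v y)\<^sup>2) = (\<Sum>T\<in>Pow {..<n}. if T \<in> H then (v T)\<^sup>2 else 0)"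
    unfolding sum_cube abs_on_cube_set_pred by (intro sum.cong) auto
  also have "\<dots> = Q" unfolding Q_def using sum.inter_restrict[of "Pow {..<n}" "\<lambda>T. (v T)\<^sup>2" H] H_cube by simp
  finally have unit: "(\<Sum>y\<in>cube n. (abs_on_cube H v y / sqrt Q)\<^sup>2) = 1"
    using \<open>Q > 0\<close> by (simp add: power_divide sum_divide_distrib[symmetric])
  have "card S * Q = (\<Sum>T\<in>H. (sqrt (card S) * \<bar>v T\<bar>)\<^sup>2)"
    unfolding Q_def by (simp add: sum_distrib_left power_mult_distrib)
  also have "\<dots> \<le> (\<Sum>T\<in>H. (W (\<lambda>j. j \<in> T))\<^sup>2)"
    using eigenvector_le_sens_adj_row[OF S H _ sensitive v(2,3)] unfolding W_def
    by (intro sum_mono power_mono) auto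
  also have "\<dots> \<le> (\<Sum>x\<in>cube n. (W x)\<^sup>2)"
    unfolding sum_cube using H_cube by (intro sum_mono2) auto
  also have "\<dots> = Q * (\<Sum>x\<in>cube n. (\<Sum>y\<in>cube n. sens_adj n f x y * (abs_on_cube H v y / sqrt Q))\<^sup>2)"
  proof -
    have "(\<Sum>y\<in>cube n. sens_adj n f x y * (abs_on_cube H v y / sqrt Q)) = W x / sqrt Q" for x
      unfolding W_def by (simp add: sum_divide_distrib)
    then show ?thesis using \<open>Q > 0\<close> by (simp add: power_divide sum_divide_distrib[symmetric])
  qed
  finally have "sqrt (card S) \<le> sqrt (\<Sum>x\<in>cube n. (\<Sum>y\<in>cube n. sens_adj n f x y * (abs_on_cube H v y / sqrt Q))\<^sup>2)"
    using \<open>Q > 0\<close> by simp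
  also have "\<dots> \<le> spec_sens n f"
    by (rule norm_sens_adj_le_spec_sens[OF unit])
  finally show ?thesis .
qed

theorem theorem1p1:
  fixes n :: nat and f :: "(nat \<Rightarrow> bool) \<Rightarrow> bool"
  shows "real (bdeg n f) \<le> (spec_sens n f)\<^sup>2"
proof (cases "bdeg n f = 0")
  case False
  then obtain S where S: "S \<subseteq> {..<n}" "ml_coeffs n f S \<noteq> 0" "card S = bdeg n f"
    by (rule bdeg_attained)
  let ?F = "\<lambda>T. f (\<lambda>i. i \<in> T)"
  have fin_S: "finite S" and "S \<noteq> {}" using S False finite_subset by auto
  have "moebius (\<lambda>T. of_bool (?F T)) S \<noteq> 0" using S ml_coeffs_eq_moebius by simp
  then have "2 * card {T\<in>Pow S. ?F T = even (card S - card T)} \<noteq> 2 ^ card S"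
    by (rule parity_twist_unbalanced[OF fin_S \<open>S \<noteq> {}\<close>])
  from large_set_of_sensitive_edges[OF fin_S \<open>S \<noteq> {}\<close> this]
  obtain H where H: "H \<subseteq> Pow S" "card H > 2 ^ (card S - 1)"
    and sensitive: "\<forall>T\<in>H. \<forall>i\<in>S. flip T i \<in> H \<longrightarrow> ?F T \<noteq> ?F (flip T i)" .
  obtain v where "\<exists>T\<in>H. v T \<noteq> 0" "\<forall>T\<in>Pow S - H. v T = 0"
    "\<forall>T\<in>Pow S. huang_op S v T = sqrt (card S) * v T"
    using huang_eigenvector_on_large_set[OF fin_S \<open>S \<noteq> {}\<close> H] .
  then have "sqrt (card S) \<le> spec_sens n f"
    using sqrt_card_le_spec_sens[OF S(1) H(1) sensitive] by blast
  then have "(sqrt (card S))\<^sup>2 \<le> (spec_sens n f)\<^sup>2" by (rule power_mono) simp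
  then show ?thesis using S(3) by simp
qed simp

end
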